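(* Let $\beta>0$, $\gamma\in(\frac12,1)$, $c_0=\frac{(2\beta)^{1/\gamma}}{4\gamma}$, $\varkappa=\frac32-\frac1{2\gamma}$, let $\eta>0$ and $U=(0,\eta)$. For $\varepsilon\in U$ put $Z_2(\varepsilon)=\frac1{5\varepsilon^{2/3}}$, and put $Z_2(0)=+\infty$. For $\varepsilon\in U\cup\{0\}$ and $z\in[-Z_2(\varepsilon),-1]$ define $$\widehat T(z,\varepsilon)=\begin{pmatrix}0&T_{12}(z,\varepsilon)\\ T_{21}(z,\varepsilon)&0\end{pmatrix},$$ $$T_{12}(z,\varepsilon)=\int_{-Z_2(\varepsilon)}^z\frac{ds}{4s(1+i\varepsilon^{1/3}\sqrt{-s})}\exp\Big(\int_s^z\frac{2ic_0\sqrt{-\sigma}\,d\sigma}{(1-\varepsilon^{2/3}\sigma)^{\varkappa}}\Big),\quad T_{21}(z,\varepsilon)=\int_{-Z_2(\varepsilon)}^z\frac{ds}{4s(1-i\varepsilon^{1/3}\sqrt{-s})}\exp\Big(-\int_s^z\frac{2ic_0\sqrt{-\sigma}\,d\sigma}{(1-\varepsilon^{2/3}\sigma)^{\varkappa}}\Big).$$ Then there exists $c_{IV}>0$ such that $\|\widehat T(z,\varepsilon)\|<\frac{c_{IV}}{|z|^{3/2}}$ for every $\varepsilon\in U\cup\{0\}$ and $z\in[-Z_2(\varepsilon),-1]$. *)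

theory Defs
  imports "HOL-Analysis.Analysis"
begin

definition c0 :: "real \<Rightarrow> real \<Rightarrow> real" where
  "c0 \<beta> \<gamma> = (2 * \<beta>) powr (1 / \<gamma>) / (4 * \<gamma>)"

definition kappa :: "real \<Rightarrow> real" where
  "kappa \<gamma> = 3/2 - 1 / (2 * \<gamma>)"

text \<open>Z_2(eps) = 1/(5 eps^(2/3)) for eps > 0; Z_2(0) = +infinity is handled by dom_int.\<close>
definition Z2 :: "real \<Rightarrow> real" where
  "Z2 \<epsilon> = 1 / (5 * \<epsilon> powr (2/3))"

definition dom_int :: "real \<Rightarrow> real \<Rightarrow> real set" where
  "dom_int \<epsilon> z = (if \<epsilon> = 0 then {..z} else {- Z2 \<epsilon> .. z})"

definition phase :: "real \<Rightarrow> real \<Rightarrow> real \<Rightarrow> real \<Rightarrow> real \<Rightarrow> real" where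
  "phase \<beta> \<gamma> \<epsilon> s z =
     integral {s..z} (\<lambda>\<sigma>. 2 * c0 \<beta> \<gamma> * sqrt (- \<sigma>) / (1 - \<epsilon> powr (2/3) * \<sigma>) powr kappa \<gamma>)"

definition f12 :: "real \<Rightarrow> real \<Rightarrow> real \<Rightarrow> real \<Rightarrow> real \<Rightarrow> complex" where
  "f12 \<beta> \<gamma> \<epsilon> z s =
     exp (\<i> * complex_of_real (phase \<beta> \<gamma> \<epsilon> s z)) /
     (4 * complex_of_real s * (1 + \<i> * complex_of_real (\<epsilon> powr (1/3) * sqrt (- s))))"

definition f21 :: "real \<Rightarrow> real \<Rightarrow> real \<Rightarrow> real \<Rightarrow> real \<Rightarrow> complex" where
  "f21 \<beta> \<gamma> \<epsilon> z s =
     exp (- (\<i> * complex_of_real (phase \<beta> \<gamma> \<epsilon> s z))) /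
     (4 * complex_of_real s * (1 - \<i> * complex_of_real (\<epsilon> powr (1/3) * sqrt (- s))))"

definition T12 :: "real \<Rightarrow> real \<Rightarrow> real \<Rightarrow> real \<Rightarrow> complex" where
  "T12 \<beta> \<gamma> \<epsilon> z = integral (dom_int \<epsilon> z) (f12 \<beta> \<gamma> \<epsilon> z)"

definition T21 :: "real \<Rightarrow> real \<Rightarrow> real \<Rightarrow> real \<Rightarrow> complex" where
  "T21 \<beta> \<gamma> \<epsilon> z = integral (dom_int \<epsilon> z) (f21 \<beta> \<gamma> \<epsilon> z)"

definition That :: "real \<Rightarrow> real \<Rightarrow> real \<Rightarrow> real \<Rightarrow> complex^2^2" where
  "That \<beta> \<gamma> \<epsilon> z = vector [vector [0, T12 \<beta> \<gamma> \<epsilon> z], vector [T21 \<beta> \<gamma> \<epsilon> z, 0]]"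

end

theory Submission
  imports Defs
begin

text \<open>The integrand of \<open>T12\<close> is \<open>E(s) / (4 s (1 + i \<epsilon>^(1/3) \<surd>(-s)))\<close> where the phase factor
  \<open>E(s) = exp (i \<Phi>(s))\<close> has modulus one and \<open>E' = - i \<Phi>' E\<close> with \<open>\<Phi>' = 2 c0 \<surd>(-s) / (1 - \<epsilon>^(2/3) s)^\<kappa>\<close>.
  So the integrand is \<open>E' h\<close> for an explicit amplitude \<open>h\<close> of size \<open>|s|^(-3/2) / (8 c0)\<close>, and integration
  by parts bounds \<open>|T12|\<close> by the boundary values of \<open>h\<close> plus \<open>\<integral>|h'|\<close>. Since \<open>\<kappa> \<le> 1\<close>, the real and
  imaginary parts of \<open>h\<close> are monotone, so \<open>\<integral>|h'|\<close> is again controlled by boundary values and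
  \<open>|T12(z)| \<le> |z|^(-3/2) / c0\<close>. The cut-off \<open>Z2\<close> is what keeps \<open>\<epsilon>^(1/3) \<surd>(-s) \<le> 1\<close> on the domain, which
  the real part of \<open>h\<close> needs. For \<open>\<epsilon> = 0\<close> these bounds, uniform in the lower limit, are a Cauchy
  criterion at \<open>-\<infinity>\<close>. Finally \<open>T21\<close> is the complex conjugate of \<open>T12\<close>.\<close>

lemma norm_integral_oscillatory_le:
  fixes E E' :: "real \<Rightarrow> complex" and p p' q q' :: "real \<Rightarrow> real"
  assumes "a \<le> b"
    and E: "continuous_on {a..b} E" "\<And>x. x \<in> {a<..<b} \<Longrightarrow> (E has_vector_derivative E' x) (at x)"
      "\<And>x. x \<in> {a..b} \<Longrightarrow> norm (E x) = 1"
    and p: "\<And>x. x \<in> {a..b} \<Longrightarrow> (p has_real_derivative p' x) (at x)"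
      "continuous_on {a..b} p'" "\<And>x. x \<in> {a..b} \<Longrightarrow> p' x \<le> 0"
    and q: "\<And>x. x \<in> {a..b} \<Longrightarrow> (q has_real_derivative q' x) (at x)"
      "continuous_on {a..b} q'" "\<And>x. x \<in> {a..b} \<Longrightarrow> q' x \<le> 0"
  defines "h \<equiv> \<lambda>x. complex_of_real (p x) + \<i> * complex_of_real (q x)"
  shows "(\<lambda>x. E' x * h x) integrable_on {a..b}"
    and "norm (integral {a..b} (\<lambda>x. E' x * h x)) \<le> 2 * (\<bar>p a\<bar> + \<bar>q a\<bar> + \<bar>p b\<bar> + \<bar>q b\<bar>)"
proof -
  define h' where "h' x = complex_of_real (p' x) + \<i> * complex_of_real (q' x)" for x
  have h_deriv: "(h has_vector_derivative h' x) (at x)" if "x \<in> {a..b}" for x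
    unfolding h_def h'_def using p(1)[OF that] q(1)[OF that]
    by (auto intro!: derivative_eq_intros)
  have "continuous_on {a..b} h"
    using h_deriv by (intro continuous_on_vector_derivative) (auto intro: has_vector_derivative_at_within)
  moreover have "continuous_on {a..b} h'"
    unfolding h'_def using p(2) q(2) by (intro continuous_intros)
  ultimately have "(\<lambda>x. E x * h' x) integrable_on {a..b}"
    using E(1) by (intro integrable_continuous_real continuous_intros)
  then obtain Y where Y: "((\<lambda>x. E x * h' x) has_integral Y) {a..b}"
    by blast
  have parts: "((\<lambda>x. E' x * h x) has_integral E b * h b - E a * h a - Y) {a..b}"
    by (rule integration_by_parts_interior[OF bounded_bilinear_mult \<open>a \<le> b\<close> E(1)
          \<open>continuous_on {a..b} h\<close> E(2) h_deriv]) (use Y in auto)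
  have "((\<lambda>x. - p x - q x) has_real_derivative - p' x - q' x) (at x)" if "x \<in> {a..b}" for x
    using p(1)[OF that] q(1)[OF that] by (intro derivative_intros)
  then have "((\<lambda>x. - p' x - q' x) has_integral (- p b - q b) - (- p a - q a)) {a..b}"
    by (intro fundamental_theorem_of_calculus[OF \<open>a \<le> b\<close>])
      (simp add: has_real_derivative_iff_has_vector_derivative[symmetric] has_field_derivative_at_within)
  moreover have "norm (E x * h' x) \<le> - p' x - q' x" if "x \<in> {a..b}" for x
  proof -
    have "norm (E x * h' x) \<le> \<bar>p' x\<bar> + \<bar>q' x\<bar>"
      using cmod_le[of "h' x"] unfolding norm_mult E(3)[OF that] h'_def by simp
    then show ?thesis using p(3)[OF that] q(3)[OF that] by linarith
  qed
  ultimately have "norm Y \<le> (- p b - q b) - (- p a - q a)"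
    using integral_norm_bound_integral[of "\<lambda>x. E x * h' x" "{a..b}" "\<lambda>x. - p' x - q' x"] Y
    by (auto simp: integral_unique)
  moreover have "norm (E x * h x) \<le> \<bar>p x\<bar> + \<bar>q x\<bar>" if "x \<in> {a..b}" for x
    using cmod_le[of "h x"] unfolding norm_mult E(3)[OF that] h_def by simp
  then have "norm (E a * h a) \<le> \<bar>p a\<bar> + \<bar>q a\<bar>" "norm (E b * h b) \<le> \<bar>p b\<bar> + \<bar>q b\<bar>"
    using \<open>a \<le> b\<close> by auto
  ultimately have "norm (E b * h b - E a * h a - Y) \<le> 2 * (\<bar>p a\<bar> + \<bar>q a\<bar> + \<bar>p b\<bar> + \<bar>q b\<bar>)"
    using norm_triangle_ineq4[of "E b * h b - E a * h a" Y] norm_triangle_ineq4[of "E b * h b" "E a * h a"]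
    by (smt (verit))
  with parts show "(\<lambda>x. E' x * h x) integrable_on {a..b}"
    and "norm (integral {a..b} (\<lambda>x. E' x * h x)) \<le> 2 * (\<bar>p a\<bar> + \<bar>q a\<bar> + \<bar>p b\<bar> + \<bar>q b\<bar>)"
    by (auto simp: integral_unique)
qed

lemma has_integral_Iic_tendsto:
  fixes f :: "real \<Rightarrow> 'a::banach"
  assumes int: "\<And>a. a \<le> b \<Longrightarrow> f integrable_on {a..b}"
    and lim: "((\<lambda>a. integral {a..b} f) \<longlongrightarrow> L) at_bot"
  shows "(f has_integral L) {..b}"
  unfolding has_integral_alt'
proof (intro conjI allI impI)
  fix a' b' :: real
  have "f integrable_on {..b} \<inter> cbox a' b'"
  proof (cases "a' \<le> b")
    case True
    then have "{..b} \<inter> cbox a' b' = {a'..min b b'}" by auto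
    then show ?thesis using int[OF True] by (auto intro: integrable_on_subinterval)
  qed auto
  then show "(\<lambda>x. if x \<in> {..b} then f x else 0) integrable_on cbox a' b'"
    using integrable_restrict_Int[of "{..b}" f "cbox a' b'"] by blast
next
  fix e :: real assume "e > 0"
  then obtain B where B: "\<And>a. a \<le> B \<Longrightarrow> norm (integral {a..b} f - L) < e"
    using lim unfolding tendsto_iff dist_norm eventually_at_bot_linorder by blast
  show "\<exists>R>0. \<forall>a' b'. ball 0 R \<subseteq> cbox a' b' \<longrightarrow>
          norm (integral (cbox a' b') (\<lambda>x. if x \<in> {..b} then f x else 0) - L) < e"
  proof (intro exI[of _ "\<bar>B\<bar> + \<bar>b\<bar> + 1"] conjI allI impI)
    fix a' b' :: real assume "ball 0 (\<bar>B\<bar> + \<bar>b\<bar> + 1) \<subseteq> cbox a' b'"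
    then have "- (\<bar>B\<bar> + \<bar>b\<bar>) \<in> cbox a' b'" "\<bar>B\<bar> + \<bar>b\<bar> \<in> cbox a' b'"
      by (auto simp: subset_iff)
    then have "a' \<le> B" "{..b} \<inter> cbox a' b' = {a'..b}" by auto
    then show "norm (integral (cbox a' b') (\<lambda>x. if x \<in> {..b} then f x else 0) - L) < e"
      unfolding integral_restrict_Int using B by presburger
  qed simp
qed

lemma integrable_on_Iic_tail_bound:
  fixes f :: "real \<Rightarrow> 'a::banach"
  assumes int: "\<And>a. a \<le> b \<Longrightarrow> f integrable_on {a..b}"
    and bound: "\<And>a x. a \<le> x \<Longrightarrow> x \<le> b \<Longrightarrow> norm (integral {a..x} f) \<le> g x"
    and g: "(g \<longlongrightarrow> 0) at_bot"
  shows "f integrable_on {..b}" and "norm (integral {..b} f) \<le> g b"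
proof -
  define I where "I a = integral {a..b} f" for a
  have tail: "dist (I a) (I a') \<le> g a'" if "a \<le> a'" "a' \<le> b" for a a'
  proof -
    have "I a = integral {a..a'} f + I a'"
      unfolding I_def using that int[of a]
      by (intro Henstock_Kurzweil_Integration.integral_combine[symmetric]) auto
    then show ?thesis using bound[OF that] by (simp add: dist_norm)
  qed
  have "cauchy_filter (filtermap I at_bot)"
    unfolding cauchy_filter_metric_filtermap
  proof (intro allI impI)
    fix e :: real assume "e > 0"
    then obtain B where B: "\<And>x. x \<le> B \<Longrightarrow> g x < e"
      using g unfolding tendsto_iff eventually_at_bot_linorder by fastforce
    have "dist (I x) (I y) < e" if "x \<le> min B b" "y \<le> min B b" for x y
      using tail[of x y] tail[of y x] B[of x] B[of y] that
      by (cases "x \<le> y") (auto simp: dist_commute)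
    moreover have "eventually (\<lambda>x. x \<le> min B b) at_bot"
      by (rule eventually_le_at_bot)
    ultimately show "\<exists>P. eventually P at_bot \<and> (\<forall>x y. P x \<and> P y \<longrightarrow> dist (I x) (I y) < e)"
      by blast
  qed
  then obtain L where L: "(I \<longlongrightarrow> L) at_bot"
    using cauchy_filter_convergent unfolding convergent_filter_iff filterlim_def by blast
  then have "(f has_integral L) {..b}"
    unfolding I_def by (intro has_integral_Iic_tendsto int)
  moreover have "norm L \<le> g b"
    using tail[of _ b] order_refl[of b]
    by (intro tendsto_le[OF _ tendsto_const tendsto_norm[OF L]])
      (auto simp: eventually_at_bot_linorder I_def dist_norm intro!: exI[of _ b])
  ultimately show "f integrable_on {..b}" and "norm (integral {..b} f) \<le> g b"
    by (auto simp: integral_unique)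
qed

lemma norm_vec_le_sum_norm: "norm (x :: 'a::real_normed_vector^'n) \<le> (\<Sum>i\<in>UNIV. norm (x $ i))"
  unfolding norm_vec_def by (rule L2_set_le_sum) simp

definition weight :: "real \<Rightarrow> real \<Rightarrow> real \<Rightarrow> real \<Rightarrow> real" where
  "weight k w p s = (1 - w * s) powr (k - 1) * (- s) powr (- p)"

definition weight' :: "real \<Rightarrow> real \<Rightarrow> real \<Rightarrow> real \<Rightarrow> real" where
  "weight' k w p s = (1 - k) * w * (1 - w * s) powr (k - 2) * (- s) powr (- p)
     + p * (1 - w * s) powr (k - 1) * (- s) powr (- p - 1)"

lemma one_le_one_minus_mult: "s < 0 \<Longrightarrow> w \<ge> 0 \<Longrightarrow> 1 \<le> 1 - w * (s::real)"
  using mult_nonneg_nonpos[of w s] by linarith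

lemma has_real_derivative_weight:
  assumes "s < 0" "w \<ge> 0"
  shows "(weight k w p has_real_derivative weight' k w p s) (at s)"
proof -
  have "0 < 1 - w * s" using one_le_one_minus_mult[OF assms] by simp
  then have "((\<lambda>s. (1 - w * s) powr (k - 1)) has_real_derivative
      (1 - k) * w * (1 - w * s) powr (k - 2)) (at s)"
    by (auto intro!: derivative_eq_intros simp: field_simps)
  moreover have "((\<lambda>s. (- s) powr (- p)) has_real_derivative p * (- s) powr (- p - 1)) (at s)"
    using assms(1) by (auto intro!: derivative_eq_intros simp: field_simps)
  ultimately have "((\<lambda>s. (1 - w * s) powr (k - 1) * (- s) powr (- p)) has_real_derivative
      (1 - k) * w * (1 - w * s) powr (k - 2) * (- s) powr (- p) + p * (- s) powr (- p - 1) * (1 - w * s) powr (k - 1))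
      (at s)"
    by (rule DERIV_mult)
  then show ?thesis
    unfolding weight_def[abs_def] weight'_def by (simp add: ac_simps)
qed

lemma weight'_nonneg:
  assumes "s < 0" "w \<ge> 0" "k \<le> 1" "p \<ge> 0"
  shows "0 \<le> weight' k w p s"
  using assms unfolding weight'_def by (intro add_nonneg_nonneg mult_nonneg_nonneg) auto

lemma continuous_on_weight':
  assumes "S \<subseteq> {..<0}" "w \<ge> 0"
  shows "continuous_on S (weight' k w p)"
proof -
  have "\<forall>s\<in>S. 0 < 1 - w * s \<and> 0 < - s"
    using assms one_le_one_minus_mult[of _ w] by force
  then show ?thesis
    unfolding weight'_def[abs_def] by (intro continuous_intros) auto
qed

lemma weight_pos_le:
  assumes "s < 0" "w \<ge> 0" "k \<le> 1"
  shows "0 < weight k w p s" and "weight k w p s \<le> (- s) powr (- p)"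
proof -
  have u: "1 \<le> 1 - w * s" by (rule one_le_one_minus_mult[OF assms(1,2)])
  then have "(1 - w * s) powr (k - 1) \<le> 1"
    using powr_mono[of "k - 1" 0 "1 - w * s"] assms(3) by simp
  then show "weight k w p s \<le> (- s) powr (- p)"
    unfolding weight_def using assms(1) by (simp add: mult_left_le_one_le)
  show "0 < weight k w p s" unfolding weight_def using u assms(1) by simp
qed

lemma neg_scaled_weight_decreasing:
  assumes "S \<subseteq> {..<0}" "w \<ge> 0" "k \<le> 1" "r \<ge> 0" "\<alpha> \<ge> 0"
  shows "\<And>x. x \<in> S \<Longrightarrow> ((\<lambda>s. - \<alpha> * weight k w r s) has_real_derivative - \<alpha> * weight' k w r x) (at x)"
    and "continuous_on S (\<lambda>x. - \<alpha> * weight' k w r x)"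
    and "\<And>x. x \<in> S \<Longrightarrow> - \<alpha> * weight' k w r x \<le> 0"
proof -
  fix x assume "x \<in> S"
  then have "x < 0" using assms(1) by auto
  show "((\<lambda>s. - \<alpha> * weight k w r s) has_real_derivative - \<alpha> * weight' k w r x) (at x)"
    by (intro DERIV_cmult has_real_derivative_weight \<open>x < 0\<close> assms(2))
  show "- \<alpha> * weight' k w r x \<le> 0"
    using weight'_nonneg[OF \<open>x < 0\<close> assms(2-4)] assms(5) by (simp add: mult_nonpos_nonneg)
next
  show "continuous_on S (\<lambda>x. - \<alpha> * weight' k w r x)"
    using continuous_on_weight'[OF assms(1,2)] by (intro continuous_intros)
qed

definition phase_rate :: "real \<Rightarrow> real \<Rightarrow> real \<Rightarrow> real \<Rightarrow> real" where
  "phase_rate c k w \<sigma> = 2 * c * sqrt (- \<sigma>) / (1 - w * \<sigma>) powr k"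

text \<open>The amplitude \<open>h\<close> solves \<open>- i \<Phi>' h = 1 / (4 s (1 + i e1 \<surd>(-s)))\<close>; with \<open>e1\<^sup>2 = w\<close> the factor
  \<open>1 - w s\<close> in \<open>\<Phi>'\<close> is \<open>|1 + i e1 \<surd>(-s)|\<^sup>2\<close>, which is why \<open>h\<close> is a combination of weights.\<close>

lemma phase_rate_mult_amplitude:
  assumes "s < 0" "w \<ge> 0" "c > 0" "e1 \<ge> 0" "e1\<^sup>2 = w"
  shows "\<i> * complex_of_real (- phase_rate c k w s) *
      (complex_of_real (- (e1 / (8 * c)) * weight k w 1 s) + \<i> * complex_of_real (- (1 / (8 * c)) * weight k w (3/2) s))
    = 1 / (4 * complex_of_real s * (1 + \<i> * complex_of_real (e1 * sqrt (- s))))"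
proof -
  define r where "r = sqrt (- s)"
  define u where "u = 1 - w * s"
  define U where "U = u powr k"
  have r: "r > 0" "s = - r\<^sup>2" using assms(1) unfolding r_def by auto
  have u: "u > 0" "u = 1 + (e1 * r)\<^sup>2"
    using one_le_one_minus_mult[OF assms(1,2)] assms(5) r(2) unfolding u_def by (auto simp: power_mult_distrib)
  have U: "U > 0" using u unfolding U_def by simp
  have "(- s) powr (3/2) = r ^ 3"
    using r by (simp add: powr_powr flip: powr_numeral)
  then have "(- s) powr (- 1) = 1 / r\<^sup>2" "(- s) powr (- (3/2)) = 1 / r ^ 3"
    using r by (simp_all add: powr_minus_divide)
  then have w1: "weight k w 1 s = U / (u * r\<^sup>2)" and w3: "weight k w (3/2) s = U / (u * r ^ 3)"
    using u unfolding weight_def U_def u_def[symmetric] by (simp_all add: powr_diff)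
  have rate: "phase_rate c k w s = 2 * c * r / U" unfolding phase_rate_def U_def u_def r_def ..
  have "\<i> * complex_of_real (- phase_rate c k w s) *
      (complex_of_real (- (e1 / (8 * c)) * weight k w 1 s) + \<i> * complex_of_real (- (1 / (8 * c)) * weight k w (3/2) s))
    = complex_of_real (- 1 / (4 * u * r\<^sup>2)) + \<i> * complex_of_real (e1 / (4 * u * r))"
    unfolding w1 w3 rate using r(1) u(1) U assms(3) by (simp add: complex_eq_iff field_simps power2_eq_square power3_eq_cube)
  also have "\<dots> = 1 / (4 * complex_of_real s * (1 + \<i> * complex_of_real (e1 * r)))"
  proof (rule eq_divide_imp)
    show "4 * complex_of_real s * (1 + \<i> * complex_of_real (e1 * r)) \<noteq> 0"
      using r by (simp add: complex_eq_iff)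
    have "(complex_of_real (- 1 / (4 * u * r\<^sup>2)) + \<i> * complex_of_real (e1 / (4 * u * r))) *
        (4 * complex_of_real s * (1 + \<i> * complex_of_real (e1 * r))) = complex_of_real ((1 + (e1 * r)\<^sup>2) / u)"
      using r u(1) by (simp add: complex_eq_iff field_simps power2_eq_square)
    also have "\<dots> = 1" using u by simp
    finally show "(complex_of_real (- 1 / (4 * u * r\<^sup>2)) + \<i> * complex_of_real (e1 / (4 * u * r))) *
        (4 * complex_of_real s * (1 + \<i> * complex_of_real (e1 * r))) = 1" .
  qed
  finally show ?thesis unfolding r_def .
qed

lemma has_real_derivative_phase_integral:
  assumes "a \<le> s" "s \<le> z" "z < 0" "w \<ge> 0"
  shows "((\<lambda>s. integral {s..z} (phase_rate c k w)) has_real_derivative - phase_rate c k w s)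
           (at s within {a..z})"
proof (rule integral_has_real_derivative')
  have "\<forall>x\<in>{a..z}. 0 < 1 - w * x"
  proof
    fix x assume "x \<in> {a..z}"
    then show "0 < 1 - w * x" using one_le_one_minus_mult[of x w] assms by auto
  qed
  then show "continuous_on {a..z} (phase_rate c k w)"
    unfolding phase_rate_def[abs_def] by (auto intro!: continuous_intros)
qed (use assms in auto)

lemma amplitude_parts_le:
  assumes "s < 0" "w \<ge> 0" "k \<le> 1" "e1 \<ge> 0" "e1\<^sup>2 = w" "w * (- s) \<le> 1"
  shows "e1 * weight k w 1 s \<le> (- s) powr - (3/2)" and "weight k w (3/2) s \<le> (- s) powr - (3/2)"
proof -
  have "e1 * sqrt (- s) = sqrt (w * (- s))"
    unfolding assms(5)[symmetric] real_sqrt_mult using assms(4) by simp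
  also have "\<dots> \<le> 1" using assms(6) by simp
  finally have "e1 * (- s) powr (1/2) \<le> 1"
    using assms(1) by (simp add: powr_half_sqrt)
  then have "e1 * (- s) powr - 1 \<le> (- s) powr - (3/2)"
    using mult_right_mono[of "e1 * (- s) powr (1/2)" 1 "(- s) powr - (3/2)"]
    by (simp add: mult.assoc flip: powr_add)
  then show "e1 * weight k w 1 s \<le> (- s) powr - (3/2)"
    using weight_pos_le[OF assms(1-3), of 1] assms(4) mult_left_mono[of _ _ e1] by (smt (verit))
  show "weight k w (3/2) s \<le> (- s) powr - (3/2)"
    using weight_pos_le[OF assms(1-3)] by simp
qed

definition phase_factor :: "real \<Rightarrow> real \<Rightarrow> real \<Rightarrow> real \<Rightarrow> real \<Rightarrow> complex" where
  "phase_factor c k w z s = exp (\<i> * complex_of_real (integral {s..z} (phase_rate c k w)))"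

lemma norm_phase_factor [simp]: "norm (phase_factor c k w z s) = 1"
  unfolding phase_factor_def by simp

lemma continuous_on_phase_factor:
  assumes "b \<le> z" "z < 0" "w \<ge> 0"
  shows "continuous_on {a..b} (phase_factor c k w z)"
proof -
  have "continuous_on {a..z} (\<lambda>s. integral {s..z} (phase_rate c k w))"
    using has_real_derivative_phase_integral[of a _ z w c k] assms by (intro DERIV_continuous_on) auto
  then show ?thesis
    unfolding phase_factor_def[abs_def] using assms(1)
    by (intro continuous_intros) (auto elim: continuous_on_subset)
qed

lemma has_vector_derivative_phase_factor:
  assumes "a < x" "x < z" "z < 0" "w \<ge> 0"
  shows "(phase_factor c k w z has_vector_derivative
           \<i> * complex_of_real (- phase_rate c k w x) * phase_factor c k w z x) (at x)"
proof -
  have "((\<lambda>s. integral {s..z} (phase_rate c k w)) has_real_derivative - phase_rate c k w x) (at x)"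
    using has_real_derivative_phase_integral[of a x z w c k] assms at_within_Icc_at[of a x z] by auto
  then have "((\<lambda>s. \<i> * complex_of_real (integral {s..z} (phase_rate c k w))) has_vector_derivative
      \<i> * complex_of_real (- phase_rate c k w x)) (at x)"
    by (auto intro!: derivative_eq_intros)
  from field_vector_diff_chain_at[OF this DERIV_exp] show ?thesis
    unfolding phase_factor_def[abs_def] o_def by (simp add: ac_simps)
qed

definition osc_integrand :: "real \<Rightarrow> real \<Rightarrow> real \<Rightarrow> real \<Rightarrow> real \<Rightarrow> real \<Rightarrow> complex" where
  "osc_integrand c k w e1 z s =
     phase_factor c k w z s / (4 * complex_of_real s * (1 + \<i> * complex_of_real (e1 * sqrt (- s))))"

lemma osc_integrand_integral_le_weights:
  assumes "c > 0" "k \<le> 1" "w \<ge> 0" "e1 \<ge> 0" "e1\<^sup>2 = w" "a \<le> b" "b \<le> z" "z < 0"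
  shows "osc_integrand c k w e1 z integrable_on {a..b}"
    and "norm (integral {a..b} (osc_integrand c k w e1 z))
           \<le> (e1 * weight k w 1 a + weight k w (3/2) a + e1 * weight k w 1 b + weight k w (3/2) b) / (4 * c)"
proof -
  have neg: "x < 0" if "x \<in> {a..b}" for x using that assms(7,8) by auto
  define E where "E = phase_factor c k w z"
  define p where "p s = - (e1 / (8 * c)) * weight k w 1 s" for s
  define q where "q s = - (1 / (8 * c)) * weight k w (3/2) s" for s
  define F where "F x = \<i> * complex_of_real (- phase_rate c k w x) * E x *
      (complex_of_real (p x) + \<i> * complex_of_real (q x))" for x
  have E_cont: "continuous_on {a..b} E"
    unfolding E_def using assms(7,8,3) by (rule continuous_on_phase_factor)
  have E_norm: "norm (E x) = 1" for x
    unfolding E_def by simp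
  have E_deriv: "(E has_vector_derivative \<i> * complex_of_real (- phase_rate c k w x) * E x) (at x)"
    if "x \<in> {a<..<b}" for x
    unfolding E_def using that assms(3,7,8) by (intro has_vector_derivative_phase_factor) auto
  have "{a..b} \<subseteq> {..<0}" "(0::real) \<le> 1" "(0::real) \<le> 3/2" "0 \<le> e1 / (8 * c)" "0 \<le> 1 / (8 * c)"
    using neg assms(1,4) by auto
  note p = neg_scaled_weight_decreasing[OF this(1) assms(3,2) this(2,4), folded p_def[abs_def]]
    and q = neg_scaled_weight_decreasing[OF this(1) assms(3,2) this(3,5), folded q_def[abs_def]]
  have parts: "F integrable_on {a..b}"
      "norm (integral {a..b} F) \<le> 2 * (\<bar>p a\<bar> + \<bar>q a\<bar> + \<bar>p b\<bar> + \<bar>q b\<bar>)"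
    unfolding F_def[abs_def]
    by (rule norm_integral_oscillatory_le[OF assms(6) E_cont E_deriv E_norm p q]; simp)+
  have F: "F x = osc_integrand c k w e1 z x" if "x \<in> {a..b}" for x
  proof -
    have "F x = E x * (\<i> * complex_of_real (- phase_rate c k w x) *
        (complex_of_real (p x) + \<i> * complex_of_real (q x)))"
      unfolding F_def by (simp only: mult_ac)
    then show ?thesis
      unfolding p_def q_def phase_rate_mult_amplitude[OF neg[OF that] assms(3,1,4,5)] osc_integrand_def E_def
      by simp
  qed
  have "F integrable_on {a..b} \<longleftrightarrow> osc_integrand c k w e1 z integrable_on {a..b}"
    by (rule integrable_cong) (rule F)
  with parts(1) show "osc_integrand c k w e1 z integrable_on {a..b}" by blast
  have "integral {a..b} F = integral {a..b} (osc_integrand c k w e1 z)"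
    by (rule integral_cong) (rule F)
  moreover have "\<bar>p x\<bar> = e1 * weight k w 1 x / (8 * c)" "\<bar>q x\<bar> = weight k w (3/2) x / (8 * c)"
    if "x \<in> {a..b}" for x
    unfolding p_def q_def using weight_pos_le(1)[OF neg[OF that] assms(3,2)] assms(1,4)
    by (simp_all add: abs_mult abs_of_pos)
  ultimately show "norm (integral {a..b} (osc_integrand c k w e1 z))
      \<le> (e1 * weight k w 1 a + weight k w (3/2) a + e1 * weight k w 1 b + weight k w (3/2) b) / (4 * c)"
    using parts(2) assms(6) by (simp add: field_simps) (simp add: add_divide_distrib ac_simps)
qed

lemma osc_integrand_integral_bound:
  assumes "c > 0" "k \<le> 1" "w \<ge> 0" "e1 \<ge> 0" "e1\<^sup>2 = w"
    and "a \<le> b" "b \<le> z" "z < 0" "w * (- a) \<le> 1"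
  shows "osc_integrand c k w e1 z integrable_on {a..b}"
    and "norm (integral {a..b} (osc_integrand c k w e1 z)) \<le> (- b) powr - (3/2) / c"
proof -
  have weights_le: "e1 * weight k w 1 x \<le> (- b) powr - (3/2) \<and> weight k w (3/2) x \<le> (- b) powr - (3/2)"
    if "x \<in> {a, b}" for x
  proof -
    have "w * (- x) \<le> 1"
      using that assms(3,6,9) mult_left_mono[of "- x" "- a" w] by auto
    then show ?thesis
      using amplitude_parts_le[of x w k e1] powr_mono2'[of "- (3/2)" "- b" "- x"] that assms by auto
  qed
  show "osc_integrand c k w e1 z integrable_on {a..b}"
    by (rule osc_integrand_integral_le_weights(1)[OF assms(1-8)])
  have "norm (integral {a..b} (osc_integrand c k w e1 z))
      \<le> (e1 * weight k w 1 a + weight k w (3/2) a + e1 * weight k w 1 b + weight k w (3/2) b) / (4 * c)"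
    by (rule osc_integrand_integral_le_weights(2)[OF assms(1-8)])
  also have "\<dots> \<le> 4 * (- b) powr - (3/2) / (4 * c)"
    using weights_le[of a] weights_le[of b] assms(1) by (intro divide_right_mono) auto
  finally show "norm (integral {a..b} (osc_integrand c k w e1 z)) \<le> (- b) powr - (3/2) / c"
    by simp
qed

lemma osc_integrand_integral_bound_Iic:
  assumes "c > 0" "k \<le> 1" "z < 0"
  shows "osc_integrand c k 0 0 z integrable_on {..z}"
    and "norm (integral {..z} (osc_integrand c k 0 0 z)) \<le> (- z) powr - (3/2) / c"
proof -
  note bound = osc_integrand_integral_bound[OF assms(1,2) order_refl order_refl _ _ _ assms(3)]
  have "((\<lambda>x. (- x) powr - (3/2) / c) \<longlongrightarrow> 0) at_bot"
    by (intro tendsto_divide_zero tendsto_neg_powr filterlim_uminus_at_top_at_bot) simp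
  with bound show "osc_integrand c k 0 0 z integrable_on {..z}"
    and "norm (integral {..z} (osc_integrand c k 0 0 z)) \<le> (- z) powr - (3/2) / c"
    by (intro integrable_on_Iic_tail_bound; simp)+
qed

lemma f12_eq_osc_integrand:
  "f12 \<beta> \<gamma> \<epsilon> z = osc_integrand (c0 \<beta> \<gamma>) (kappa \<gamma>) (\<epsilon> powr (2/3)) (\<epsilon> powr (1/3)) z"
  unfolding f12_def[abs_def] osc_integrand_def[abs_def] phase_factor_def phase_def phase_rate_def[abs_def]
  by simp

lemma f21_eq_cnj_f12: "f21 \<beta> \<gamma> \<epsilon> z = (\<lambda>s. cnj (f12 \<beta> \<gamma> \<epsilon> z s))"
  unfolding f21_def[abs_def] f12_def[abs_def] by (simp add: exp_cnj)

lemma f21_integrable_iff: "f21 \<beta> \<gamma> \<epsilon> z integrable_on S \<longleftrightarrow> f12 \<beta> \<gamma> \<epsilon> z integrable_on S"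
  unfolding f21_eq_cnj_f12 by (rule integrable_on_cnj_iff)

lemma norm_T21_eq_norm_T12: "norm (T21 \<beta> \<gamma> \<epsilon> z) = norm (T12 \<beta> \<gamma> \<epsilon> z)"
  unfolding T21_def T12_def f21_eq_cnj_f12 integral_cnj[symmetric] by simp

lemma T12_bound:
  assumes "\<beta> > 0" "0 < \<gamma>" "\<gamma> \<le> 1" "0 \<le> \<epsilon>" "z < 0" "\<epsilon> \<noteq> 0 \<longrightarrow> - Z2 \<epsilon> \<le> z"
  shows "f12 \<beta> \<gamma> \<epsilon> z integrable_on dom_int \<epsilon> z"
    and "norm (T12 \<beta> \<gamma> \<epsilon> z) \<le> (- z) powr - (3/2) / c0 \<beta> \<gamma>"
proof -
  have c: "c0 \<beta> \<gamma> > 0" unfolding c0_def using assms(1,2) by simp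
  have k: "kappa \<gamma> \<le> 1" unfolding kappa_def using assms(2,3) by (simp add: field_simps)
  have "f12 \<beta> \<gamma> \<epsilon> z integrable_on dom_int \<epsilon> z \<and>
      norm (integral (dom_int \<epsilon> z) (f12 \<beta> \<gamma> \<epsilon> z)) \<le> (- z) powr - (3/2) / c0 \<beta> \<gamma>"
  proof (cases "\<epsilon> = 0")
    case True
    then show ?thesis
      unfolding f12_eq_osc_integrand dom_int_def
      using osc_integrand_integral_bound_Iic[OF c k assms(5)] by simp
  next
    case False
    define w where "w = \<epsilon> powr (2/3)"
    have "(\<epsilon> powr (1/3))\<^sup>2 = w"
      unfolding w_def by (simp add: power2_eq_square flip: powr_add)
    moreover have "w * (- (- Z2 \<epsilon>)) \<le> 1"
      using False assms(4) unfolding w_def Z2_def by simp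
    ultimately show ?thesis
      unfolding f12_eq_osc_integrand dom_int_def w_def[symmetric] using False assms(6)
      by (simp add: osc_integrand_integral_bound[OF c k _ _ _ _ order_refl assms(5)] w_def)
  qed
  then show "f12 \<beta> \<gamma> \<epsilon> z integrable_on dom_int \<epsilon> z"
    and "norm (T12 \<beta> \<gamma> \<epsilon> z) \<le> (- z) powr - (3/2) / c0 \<beta> \<gamma>"
    unfolding T12_def by auto
qed

lemma norm_That_le: "norm (That \<beta> \<gamma> \<epsilon> z) \<le> norm (T12 \<beta> \<gamma> \<epsilon> z) + norm (T21 \<beta> \<gamma> \<epsilon> z)"
proof -
  have vector_2_norm: "norm (vector [a, b] :: complex^2) \<le> norm a + norm b" for a b
    using norm_vec_le_sum_norm[of "vector [a, b] :: complex^2"] by (simp add: sum_2)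
  have "norm (That \<beta> \<gamma> \<epsilon> z)
      \<le> norm (vector [0, T12 \<beta> \<gamma> \<epsilon> z] :: complex^2) + norm (vector [T21 \<beta> \<gamma> \<epsilon> z, 0] :: complex^2)"
    using norm_vec_le_sum_norm[of "That \<beta> \<gamma> \<epsilon> z"] unfolding That_def sum_2 by simp
  also have "\<dots> \<le> (norm (0::complex) + norm (T12 \<beta> \<gamma> \<epsilon> z)) + (norm (T21 \<beta> \<gamma> \<epsilon> z) + norm (0::complex))"
    by (intro add_mono vector_2_norm)
  finally show ?thesis by simp
qed

theorem lemma8p6:
  fixes \<beta> \<gamma> \<eta> :: real
  assumes "\<beta> > 0" and "1/2 < \<gamma>" and "\<gamma> < 1" and "\<eta> > 0"
  shows "\<exists>cIV > 0. \<forall>\<epsilon> z.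
           (\<epsilon> = 0 \<or> (0 < \<epsilon> \<and> \<epsilon> < \<eta>)) \<and> z \<le> -1 \<and> (\<epsilon> \<noteq> 0 \<longrightarrow> - Z2 \<epsilon> \<le> z) \<longrightarrow>
             f12 \<beta> \<gamma> \<epsilon> z integrable_on dom_int \<epsilon> z \<and>
             f21 \<beta> \<gamma> \<epsilon> z integrable_on dom_int \<epsilon> z \<and>
             norm (That \<beta> \<gamma> \<epsilon> z) < cIV / \<bar>z\<bar> powr (3/2)"
proof -
  define c where "c = c0 \<beta> \<gamma>"
  have c: "c > 0" unfolding c_def c0_def using assms(1,2) by simp
  have \<gamma>: "0 < \<gamma>" "\<gamma> \<le> 1" using assms(2,3) by auto
  show ?thesis
  proof (intro exI[of _ "3 / c"] conjI allI impI)
    fix \<epsilon> z :: real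
    assume "(\<epsilon> = 0 \<or> (0 < \<epsilon> \<and> \<epsilon> < \<eta>)) \<and> z \<le> -1 \<and> (\<epsilon> \<noteq> 0 \<longrightarrow> - Z2 \<epsilon> \<le> z)"
    then have "0 \<le> \<epsilon>" "z < 0" "\<epsilon> \<noteq> 0 \<longrightarrow> - Z2 \<epsilon> \<le> z" by auto
    note T12 = T12_bound[OF assms(1) \<gamma> this, folded c_def]
    show "f12 \<beta> \<gamma> \<epsilon> z integrable_on dom_int \<epsilon> z"
      and "f21 \<beta> \<gamma> \<epsilon> z integrable_on dom_int \<epsilon> z"
      using T12(1) by (simp_all add: f21_integrable_iff)
    have "norm (That \<beta> \<gamma> \<epsilon> z) \<le> 2 * ((- z) powr - (3/2) / c)"
      using norm_That_le[of \<beta> \<gamma> \<epsilon> z] T12(2)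
      unfolding norm_T21_eq_norm_T12 by simp
    also have "\<dots> < 3 / c / \<bar>z\<bar> powr (3/2)"
      using c \<open>z < 0\<close> by (simp add: powr_minus_divide field_simps)
    finally show "norm (That \<beta> \<gamma> \<epsilon> z) < 3 / c / \<bar>z\<bar> powr (3/2)" .
  qed (use c in simp)
qed

end
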